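(* Let $G$ be an $(n,n,p_s,p_d)$-two-island network with groups $V_1,V_2$ and degree of homophily $h_G=p_s/p_d$, and let the dual opinions evolve according to the dynamics in the context with common resilience $\phi\in(0,1)$, common bias $b$ with $\frac{2}{\phi(h_G-1)+2}<b<1$, and the symmetric initial condition $x_i(0)=x_0\in(\tfrac12,1)$, $y_i(0)=y_0\in[\tfrac12,x_0]$ for $i\in V_1$, $x_j(0)=1-x_0$, $y_j(0)=1-y_0$ for $j\in V_2$. Let $i\in V_1$. If there exists $T>0$ such that $\hat x(\phi,h_G,b)\le x_i(t)<\hat x(1,h_G,b)$ for all $t\ge T$, then there exists $\mathcal T>T$ such that $x_i(t)$ and $y_i(t)$ are monotonic for $t\ge\mathcal T$, and $$\lim_{t\to\infty}x_i(t)=\hat x(\phi,h_G,b),\qquad \lim_{t\to\infty}y_i(t)=\frac{\phi(h_G+1)\hat x(\phi,h_G,b)+1-\phi}{\phi h_G+2-\phi}.$$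
   Context: Let $n\ge 1$ and $p_s,p_d\in(0,1)$ with $p_s>p_d$ and $np_s,np_d$ positive integers. An $(n,n,p_s,p_d)$-two-island network is an undirected graph (no self-loops) with vertex set $V=V_1\cup V_2$, $V_1\cap V_2=\emptyset$, $|V_1|=|V_2|=n$, such that each node of $V_1$ has exactly $np_s$ neighbours in $V_1$ and $np_d$ neighbours in $V_2$, and each node of $V_2$ has exactly $np_s$ neighbours in $V_2$ and $np_d$ neighbours in $V_1$. Its degree of homophily is $h_G=p_s/p_d>1$. Let $w_{ij}\in\{0,1\}$ be the adjacency matrix, $N_i$ the set of neighbours of $i$, and $d_i=\sum_{j\in N_i}w_{ij}$. Dual opinions dynamics: each $i\in V$ has $x_i(t),y_i(t)\in[0,1]$, $t=0,1,2,\dots$, updated by $$x_i(t+1)=\frac{x_i(t)^{b}s_i(t)}{x_i(t)^{b}s_i(t)+(1-x_i(t))^{b}(d_i-s_i(t))},\qquad y_i(t+1)=\phi\, x_i(t+1)+(1-\phi)\hat y_{i,avg}(t),$$ with $s_i(t)=\sum_{j\in N_i}w_{ij}y_j(t)$ and $\hat y_{i,avg}(t)=\sum_{j\in N_i}\frac{w_{ij}}{d_i}y_j(t)$. For $0<b<1$ define $g(x,b)=\frac{x^{1-b}-(1-x)^{1-b}}{x(1-x)^{1-b}-(1-x)x^{1-b}}$ for $x\in(\tfrac12,1)$ and $g(\tfrac12,b)=\frac2b-2$. For $\psi\in(0,1]$ with $\frac{2}{\psi(h_G-1)+2}<b<1$, $\hat x(\psi,h_G,b)$ denotes the unique solution $x\in(\tfrac12,1)$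 of $g(x,b)=\psi(h_G-1)$ (in particular $\hat x(1,h_G,b)$ solves $g(x,b)=h_G-1$). *)

theory Defs
  imports "HOL-Analysis.Analysis"
begin

text \<open>An undirected graph without self-loops is given by a symmetric, irreflexive
adjacency relation E on the vertex set V1 \<union> V2 (w_ij = 1 iff E i j).\<close>

definition two_island :: "('a \<Rightarrow> 'a \<Rightarrow> bool) \<Rightarrow> 'a set \<Rightarrow> 'a set \<Rightarrow> nat \<Rightarrow> real \<Rightarrow> real \<Rightarrow> bool" where
  "two_island E V1 V2 n ps pd \<longleftrightarrow>
     n \<ge> 1 \<and> 0 < pd \<and> pd < ps \<and> ps < 1 \<and>
     real n * ps \<in> \<nat> \<and> real n * pd \<in> \<nat> \<and> real n * ps > 0 \<and> real n * pd > 0 \<and>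
     finite V1 \<and> finite V2 \<and> V1 \<inter> V2 = {} \<and> card V1 = n \<and> card V2 = n \<and>
     (\<forall>i j. E i j \<longrightarrow> i \<in> V1 \<union> V2 \<and> j \<in> V1 \<union> V2) \<and>
     (\<forall>i j. E i j \<longleftrightarrow> E j i) \<and> (\<forall>i. \<not> E i i) \<and>
     (\<forall>i\<in>V1. real (card {j\<in>V1. E i j}) = real n * ps \<and> real (card {j\<in>V2. E i j}) = real n * pd) \<and>
     (\<forall>i\<in>V2. real (card {j\<in>V2. E i j}) = real n * ps \<and> real (card {j\<in>V1. E i j}) = real n * pd)"

definition nbrs :: "('a \<Rightarrow> 'a \<Rightarrow> bool) \<Rightarrow> 'a \<Rightarrow> 'a set" where
  "nbrs E i = {j. E i j}"

definition deg :: "('a \<Rightarrow> 'a \<Rightarrow> bool) \<Rightarrow> 'a \<Rightarrow> real" where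
  "deg E i = real (card (nbrs E i))"

definition sval :: "('a \<Rightarrow> 'a \<Rightarrow> bool) \<Rightarrow> ('a \<Rightarrow> real) \<Rightarrow> 'a \<Rightarrow> real" where
  "sval E y i = (\<Sum>j\<in>nbrs E i. y j)"

definition dual_dynamics :: "('a \<Rightarrow> 'a \<Rightarrow> bool) \<Rightarrow> 'a set \<Rightarrow> real \<Rightarrow> real
    \<Rightarrow> (nat \<Rightarrow> 'a \<Rightarrow> real) \<Rightarrow> (nat \<Rightarrow> 'a \<Rightarrow> real) \<Rightarrow> bool" where
  "dual_dynamics E V phi b x y \<longleftrightarrow>
    (\<forall>t. \<forall>i\<in>V.
       x (Suc t) i = (x t i powr b * sval E (y t) i) /
                     (x t i powr b * sval E (y t) i + (1 - x t i) powr b * (deg E i - sval E (y t) i)) \<and>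
       y (Suc t) i = phi * x (Suc t) i + (1 - phi) * (sval E (y t) i / deg E i))"

definition g_fun :: "real \<Rightarrow> real \<Rightarrow> real" where
  "g_fun x b = (if x = 1/2 then 2 / b - 2 else
     (x powr (1 - b) - (1 - x) powr (1 - b)) / (x * (1 - x) powr (1 - b) - (1 - x) * x powr (1 - b)))"

definition x_hat :: "real \<Rightarrow> real \<Rightarrow> real \<Rightarrow> real" where
  "x_hat psi h b = (THE x. 1/2 < x \<and> x < 1 \<and> g_fun x b = psi * (h - 1))"

end

theory Submission
  imports Defs "HOL-Real_Asymp.Real_Asymp"
begin

text \<open>On the symmetric orbit every node of \<open>V1\<close> carries the same pair \<open>(X t, Y t)\<close> and every node
  of \<open>V2\<close> the pair \<open>(1 - X t, 1 - Y t)\<close>, so the dynamics reduces to the planar system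
  \<open>X' = F (X, m Y)\<close>, \<open>Y' = \<phi> X' + (1 - \<phi>) m Y\<close>, where the biased update \<open>F\<close> is nondecreasing in
  both arguments and \<open>m w = (h w + 1 - w) / (h + 1)\<close> is the neighbours' mean.
  In this cooperative system a step in which \<open>X\<close> and \<open>Y\<close> move in the same direction is followed
  by another such step, and a step in which they move in opposite directions can only be followed
  by one with the same pattern; so both sequences are eventually monotone and, being bounded,
  converge. Eliminating \<open>W\<close> from the fixed-point equations of the limit \<open>(L, W)\<close> gives
  \<open>g L b = \<phi> (h - 1)\<close>. The hypothesis puts \<open>L\<close> into \<open>(1/2, 1)\<close>, where this equation has exactly
  one root, hence \<open>L = x_hat \<phi> h b\<close>, and \<open>W\<close> follows linearly.\<close>

section \<open>The root of \<open>g x b = c\<close>\<close>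

text \<open>For \<open>1/2 < x < 1\<close>, \<open>g x b = c\<close> is equivalent to
  \<open>(1 + c x) (1 - x) powr (1 - b) = (1 + c - c x) x powr (1 - b)\<close>; \<open>g_log_gap c b x\<close> is the
  logarithm of the quotient of the two sides.\<close>

definition g_log_gap :: "real \<Rightarrow> real \<Rightarrow> real \<Rightarrow> real" where
  "g_log_gap c b x = ln (1 + c * x) - ln (1 + c - c * x) - (1 - b) * ln x + (1 - b) * ln (1 - x)"

lemma g_log_gap_has_derivative:
  assumes "0 < c" "0 < x" "x < 1"
  shows "(g_log_gap c b has_real_derivative
            c / (1 + c * x) + c / (1 + c - c * x) - (1 - b) / x - (1 - b) / (1 - x)) (at x)"
proof -
  have "c * x < c" "0 < c * x"
    using assms mult_strict_left_mono[of x 1 c] by simp_all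
  then have "0 < 1 + c * x" "0 < 1 + c - c * x"
    by simp_all
  then have "((\<lambda>x. ln (1 + c * x)) has_real_derivative c / (1 + c * x)) (at x)"
    "((\<lambda>x. ln (1 + c - c * x)) has_real_derivative - c / (1 + c - c * x)) (at x)"
    "((\<lambda>x. ln (1 - x)) has_real_derivative - 1 / (1 - x)) (at x)"
    using assms by (auto intro!: derivative_eq_intros simp: field_simps)
  then have "((\<lambda>x. ln (1 + c * x) - ln (1 + c - c * x) - (1 - b) * ln x + (1 - b) * ln (1 - x))
      has_real_derivative c / (1 + c * x) - - c / (1 + c - c * x) - (1 - b) * (1 / x) + (1 - b) * (- 1 / (1 - x))) (at x)"
    using assms by (intro DERIV_add DERIV_diff DERIV_cmult DERIV_ln_divide)
  then show ?thesis
    unfolding g_log_gap_def by (rule DERIV_cong) (simp add: field_simps)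
qed

lemma g_log_gap_half [simp]: "g_log_gap c b (1/2) = 0"
  unfolding g_log_gap_def by (simp add: ac_simps)

lemma continuous_on_g_log_gap:
  assumes "0 < c"
  shows "continuous_on {0<..<1} (g_log_gap c b)"
proof (intro continuous_at_imp_continuous_on ballI)
  fix x :: real
  assume "x \<in> {0<..<1}"
  then have "0 < x" "x < 1"
    by auto
  then show "isCont (g_log_gap c b) x"
    by (rule DERIV_isCont[OF g_log_gap_has_derivative[OF assms]])
qed

lemma g_log_gap_critical_point_between:
  assumes c: "0 < c" and b: "b < 1" and uv: "0 < u" "u < v" "v < 1"
    and eq: "g_log_gap c b u = g_log_gap c b v"
  obtains z where "u < z" "z < v" "z * (1 - z) * (2 * c + b * c\<^sup>2) = (1 - b) * (1 + c)"
proof -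
  have "continuous_on {u..v} (g_log_gap c b)"
    using continuous_on_g_log_gap[OF c] by (rule continuous_on_subset) (use uv in auto)
  moreover have "g_log_gap c b differentiable (at x)" if "u < x" "x < v" for x
  proof -
    have "0 < x" "x < 1"
      using that uv by auto
    then show ?thesis
      using g_log_gap_has_derivative[OF c] real_differentiable_def by blast
  qed
  ultimately obtain z where z: "u < z" "z < v" and crit: "DERIV (g_log_gap c b) z :> 0"
    using Rolle[OF uv(2) eq] by blast
  have z01: "0 < z" "z < 1"
    using z uv by auto
  have "c / (1 + c * z) + c / (1 + c - c * z) - (1 - b) / z - (1 - b) / (1 - z) = 0"
    using DERIV_unique[OF g_log_gap_has_derivative[OF c z01] crit] .
  moreover have "c * z < c" "0 < c * z"
    using c z01 mult_strict_left_mono[of z 1 c] by simp_all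
  ultimately have "z * (1 - z) * (2 * c + b * c\<^sup>2) = (1 - b) * (1 + c)"
    using z01 by (simp add: divide_simps) algebra
  with z show thesis by (rule that)
qed

lemma g_log_gap_zero_unique:
  assumes c: "0 < c" and b: "b < 1"
    and x: "1/2 < x" "x < 1" "g_log_gap c b x = 0" and y: "1/2 < y" "y < 1" "g_log_gap c b y = 0"
  shows "x = y"
proof (rule ccontr)
  assume "x \<noteq> y"
  define u v where "u = min x y" and "v = max x y"
  have uv: "1/2 < u" "u < v" "v < 1" "g_log_gap c b u = 0" "g_log_gap c b v = 0"
    using x y \<open>x \<noteq> y\<close> by (auto simp: u_def v_def min_def max_def)
  \<comment> \<open>Rolle on \<open>[1/2, u]\<close> and \<open>[u, v]\<close> gives two critical points with the same value of
    \<open>z (1 - z)\<close>, which is impossible for distinct points of \<open>(1/2, 1)\<close>.\<close>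
  obtain z1 where z1: "1/2 < z1" "z1 < u" and crit1: "z1 * (1 - z1) * (2 * c + b * c\<^sup>2) = (1 - b) * (1 + c)"
    using g_log_gap_critical_point_between[OF c b, of "1/2" u] uv by auto
  obtain z2 where z2: "u < z2" "z2 < v" and crit2: "z2 * (1 - z2) * (2 * c + b * c\<^sup>2) = (1 - b) * (1 + c)"
    using g_log_gap_critical_point_between[OF c b, of u v] uv by auto
  have "2 * c + b * c\<^sup>2 \<noteq> 0"
    using crit1 b c by auto
  with crit1 crit2 have "z1 * (1 - z1) = z2 * (1 - z2)"
    using mult_right_cancel[of "2 * c + b * c\<^sup>2" "z1 * (1 - z1)" "z2 * (1 - z2)"] by argo
  moreover have "z2 * (1 - z2) - z1 * (1 - z1) = (z2 - z1) * (1 - z1 - z2)"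
    by algebra
  moreover have "(z2 - z1) * (1 - z1 - z2) < 0"
    using z1 z2 uv by (intro mult_pos_neg) auto
  ultimately show False
    by linarith
qed

lemma g_log_gap_zero_exists:
  assumes c: "0 < c" and b: "b < 1" and bc: "2 < b * (c + 2)"
  obtains x where "1/2 < x" "x < 1" "g_log_gap c b x = 0"
proof -
  \<comment> \<open>The function vanishes at \<open>1/2\<close> with positive slope (this is where \<open>b (c + 2) > 2\<close> enters)
    and tends to \<open>-\<infinity>\<close> at \<open>1\<close>.\<close>
  have "(1 - b) * (2 + c) < c"
    using bc by (simp add: algebra_simps)
  then have "1 - b < c / (2 + c)"
    using c by (simp add: pos_less_divide_eq)
  moreover have "c / (1 + c * (1/2)) = 2 * (c / (2 + c))" "c / (1 + c - c * (1/2)) = 2 * (c / (2 + c))"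
    by (simp_all add: field_simps)
  ultimately have "0 < c / (1 + c * (1/2)) + c / (1 + c - c * (1/2)) - (1 - b) / (1/2) - (1 - b) / (1 - 1/2)"
    by simp
  from DERIV_pos_inc_right[OF g_log_gap_has_derivative[OF c, of "1/2"] this]
  obtain d where d: "0 < d" "\<And>h. 0 < h \<Longrightarrow> h < d \<Longrightarrow> 0 < g_log_gap c b (1/2 + h)"
    by auto
  define a where "a = 1/2 + min (d/2) (1/4)"
  have a: "1/2 < a" "a < 1" "0 < g_log_gap c b a"
    using d unfolding a_def by auto
  have "filterlim (g_log_gap c b) at_bot (at_left 1)"
    unfolding g_log_gap_def using c b by real_asymp
  then have "\<forall>\<^sub>F x in at_left 1. g_log_gap c b x < 0"
    by (simp add: filterlim_at_bot_dense)
  moreover have "\<forall>\<^sub>F x in at_left 1. x \<in> {a<..<1}"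
    using a by (intro eventually_at_left_real) simp
  ultimately have "\<forall>\<^sub>F x in at_left 1. g_log_gap c b x < 0 \<and> x \<in> {a<..<1}"
    by (rule eventually_conj)
  then obtain a' where a': "a < a'" "a' < 1" "g_log_gap c b a' < 0"
    using eventually_happens'[of "at_left (1::real)"] by auto
  have "continuous_on {a..a'} (g_log_gap c b)"
    using continuous_on_g_log_gap[OF c] by (rule continuous_on_subset) (use a a' in auto)
  then obtain x where x: "a \<le> x" "x \<le> a'" "g_log_gap c b x = 0"
    using IVT2'[of "g_log_gap c b" a' 0 a] a a' by auto
  show thesis
    by (rule that[of x]) (use a a' x in auto)
qed

lemma g_fun_eq_iff_g_log_gap_zero:
  assumes x: "1/2 < x" "x < 1" and c: "0 < c" and b: "b < 1"
  shows "g_fun x b = c \<longleftrightarrow> g_log_gap c b x = 0"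
proof -
  define r q where "r = x powr (1 - b)" and "q = (1 - x) powr (1 - b)"
  have "q < r" "0 < q"
    unfolding r_def q_def using x b by (auto intro: powr_less_mono2)
  have "c * x < c" "0 < c * x"
    using x c mult_strict_left_mono[of x 1 c] by simp_all
  then have pos: "0 < (1 + c * x) * q" "0 < (1 + c - c * x) * r"
    using \<open>q < r\<close> \<open>0 < q\<close> by simp_all
  have "g_log_gap c b x = ln ((1 + c * x) * q) - ln ((1 + c - c * x) * r)"
    unfolding g_log_gap_def r_def q_def using pos x \<open>0 < c * x\<close> \<open>c * x < c\<close> by (simp add: ln_mult)
  then have "g_log_gap c b x = 0 \<longleftrightarrow> (1 + c * x) * q = (1 + c - c * x) * r"
    using pos by simp
  also have "\<dots> \<longleftrightarrow> r - q = c * (x * q - (1 - x) * r)"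
    by (auto simp: algebra_simps)
  also have "\<dots> \<longleftrightarrow> (r - q) / (x * q - (1 - x) * r) = c"
    using \<open>q < r\<close> c by (cases "x * q - (1 - x) * r = 0") (auto simp: divide_eq_eq)
  also have "\<dots> \<longleftrightarrow> g_fun x b = c"
    unfolding g_fun_def r_def q_def using x by auto
  finally show ?thesis
    by simp
qed

lemma g_fun_unique_root:
  assumes c: "0 < c" and b: "b < 1" and bc: "2 < b * (c + 2)"
  shows "\<exists>!x. 1/2 < x \<and> x < 1 \<and> g_fun x b = c"
proof -
  obtain x where x: "1/2 < x" "x < 1" "g_log_gap c b x = 0"
    using g_log_gap_zero_exists[OF c b bc] .
  show ?thesis
  proof (rule ex1I[of _ x])
    show "1/2 < x \<and> x < 1 \<and> g_fun x b = c"
      using x g_fun_eq_iff_g_log_gap_zero[OF x(1,2) c b] by simp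
  next
    fix y assume "1/2 < y \<and> y < 1 \<and> g_fun y b = c"
    then show "y = x"
      using g_log_gap_zero_unique[OF c b] g_fun_eq_iff_g_log_gap_zero[OF _ _ c b] x by blast
  qed
qed

lemma x_hat_root:
  assumes "0 < psi * (h - 1)" "b < 1" "2 < b * (psi * (h - 1) + 2)"
  shows "1/2 < x_hat psi h b" "x_hat psi h b < 1" "g_fun (x_hat psi h b) b = psi * (h - 1)"
  using theI'[OF g_fun_unique_root[OF assms]] unfolding x_hat_def by auto

lemma x_hat_eqI:
  assumes "0 < psi * (h - 1)" "b < 1" "2 < b * (psi * (h - 1) + 2)"
    and "1/2 < x" "x < 1" "g_fun x b = psi * (h - 1)"
  shows "x_hat psi h b = x"
  unfolding x_hat_def using g_fun_unique_root[OF assms(1-3)] assms(4-6) by (intro the1_equality) auto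

lemma bias_above_threshold:
  fixes phi h b :: real
  assumes phi: "0 < phi" "phi \<le> 1" and h: "1 < h" and b: "2 / (phi * (h - 1) + 2) < b"
  shows "0 < b" "2 < b * (phi * (h - 1) + 2)" "2 < b * (1 * (h - 1) + 2)"
proof -
  have c: "0 < phi * (h - 1)"
    using phi h by (simp add: zero_less_mult_iff)
  then show b_phi: "2 < b * (phi * (h - 1) + 2)"
    using b by (simp add: divide_less_eq mult.commute)
  show "0 < b"
  proof (rule ccontr)
    assume "\<not> 0 < b"
    then have "b * (phi * (h - 1) + 2) \<le> 0"
      using c by (simp add: mult_nonpos_nonneg)
    with b_phi show False
      by simp
  qed
  moreover have "phi * (h - 1) \<le> 1 * (h - 1)"
    using phi h by simp
  ultimately have "b * (phi * (h - 1) + 2) \<le> b * (1 * (h - 1) + 2)"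
    by (intro mult_left_mono) simp_all
  with b_phi show "2 < b * (1 * (h - 1) + 2)"
    by linarith
qed

section \<open>The biased update\<close>

definition biased_update :: "real \<Rightarrow> real \<Rightarrow> real \<Rightarrow> real" where
  "biased_update b u a = u powr b * a / (u powr b * a + (1 - u) powr b * (1 - a))"

lemma biased_update_bounds:
  assumes "0 < u" "u < 1" "0 < a" "a < 1"
  shows "0 < biased_update b u a" "biased_update b u a < 1"
proof -
  have "0 < u powr b * a" "0 < (1 - u) powr b * (1 - a)"
    using assms by simp_all
  then show "0 < biased_update b u a" "biased_update b u a < 1"
    unfolding biased_update_def by simp_all
qed

lemma biased_update_mono:
  assumes b: "0 \<le> b" and u: "0 < u1" "u1 \<le> u2" "u2 < 1" and a: "0 < a1" "a1 \<le> a2" "a2 < 1"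
  shows "biased_update b u1 a1 \<le> biased_update b u2 a2"
proof -
  define n1 n2 d1 d2 where "n1 = u1 powr b * a1" and "n2 = u2 powr b * a2"
    and "d1 = (1 - u1) powr b * (1 - a1)" and "d2 = (1 - u2) powr b * (1 - a2)"
  have pos: "0 < n1" "0 < n2" "0 < d1" "0 < d2"
    unfolding n1_def n2_def d1_def d2_def using u a by simp_all
  have "n1 \<le> n2" "d2 \<le> d1"
    unfolding n1_def n2_def d1_def d2_def using u a b by (auto intro!: mult_mono powr_mono2)
  then have "n1 * d2 \<le> n2 * d1"
    using pos by (intro mult_mono) auto
  then have "n1 / (n1 + d1) \<le> n2 / (n2 + d2)"
    using pos by (simp add: divide_simps algebra_simps)
  then show ?thesis
    unfolding biased_update_def n1_def n2_def d1_def d2_def .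
qed

lemma biased_update_complement:
  assumes "0 < u" "u < 1" "0 < a" "a < 1"
  shows "biased_update b (1 - u) (1 - a) = 1 - biased_update b u a"
proof -
  have "0 < u powr b * a + (1 - u) powr b * (1 - a)"
    using assms by (simp add: add_pos_pos)
  then show ?thesis
    unfolding biased_update_def by (simp add: field_simps)
qed

lemma tendsto_biased_update:
  assumes "(u \<longlongrightarrow> L) F" "(a \<longlongrightarrow> M) F" "0 < L" "L < 1" "0 < M" "M < 1"
  shows "((\<lambda>t. biased_update b (u t) (a t)) \<longlongrightarrow> biased_update b L M) F"
proof -
  have "0 < L powr b * M + (1 - L) powr b * (1 - M)"
    using assms by (simp add: add_pos_pos)
  then show ?thesis
    unfolding biased_update_def using assms by (intro tendsto_intros) auto
qed

lemma biased_update_fixed_iff: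
  assumes L: "0 < L" "L < 1" and M: "0 < M" "M < 1"
  shows "biased_update b L M = L \<longleftrightarrow> L powr (1 - b) * (1 - M) = (1 - L) powr (1 - b) * M"
proof -
  define l l' r r' where "l = L powr b" and "l' = (1 - L) powr b"
    and "r = L powr (1 - b)" and "r' = (1 - L) powr (1 - b)"
  have pos: "0 < l" "0 < l'"
    unfolding l_def l'_def using L by simp_all
  have split: "L = l * r" "1 - L = l' * r'"
    unfolding l_def l'_def r_def r'_def using L by (simp_all add: powr_add[symmetric])
  have den: "0 < l * M + l' * (1 - M)"
    using pos M by (simp add: add_pos_pos)
  have "biased_update b L M = L \<longleftrightarrow> l * M = L * (l * M + l' * (1 - M))"
    unfolding biased_update_def l_def[symmetric] l'_def[symmetric] using den by (simp add: divide_eq_eq)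
  also have "\<dots> \<longleftrightarrow> (l * l') * (r * (1 - M)) = (l * l') * (r' * M)"
  proof
    assume "l * M = L * (l * M + l' * (1 - M))"
    then show "(l * l') * (r * (1 - M)) = (l * l') * (r' * M)"
      using split by algebra
  next
    assume "(l * l') * (r * (1 - M)) = (l * l') * (r' * M)"
    then show "l * M = L * (l * M + l' * (1 - M))"
      using split by algebra
  qed
  also have "\<dots> \<longleftrightarrow> r * (1 - M) = r' * M"
    using pos by simp
  finally show ?thesis
    unfolding r_def r'_def .
qed

lemma g_fun_of_fixed_point:
  assumes L: "1/2 < L" "L < 1" and M: "0 < M" "M < 1" and b: "b < 1"
    and fixed: "biased_update b L M = L" and balance: "2 * M - 1 = c * (L - M)"
  shows "g_fun L b = c"
proof -
  define r q where "r = L powr (1 - b)" and "q = (1 - L) powr (1 - b)"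
  have "q < r"
    unfolding r_def q_def using L b by (intro powr_less_mono2) auto
  have "r * (1 - M) = q * M"
    using biased_update_fixed_iff[of L M b] fixed L M unfolding r_def q_def by simp
  with balance have "r - q = c * (L * q - (1 - L) * r)"
    by algebra
  with \<open>q < r\<close> have "L * q - (1 - L) * r \<noteq> 0"
    by auto
  with \<open>r - q = c * (L * q - (1 - L) * r)\<close> show ?thesis
    unfolding g_fun_def r_def[symmetric] q_def[symmetric] using L by auto
qed

section \<open>Eventually monotone cooperative orbits\<close>

definition monotone_from :: "nat \<Rightarrow> (nat \<Rightarrow> real) \<Rightarrow> bool" where
  "monotone_from T0 f \<longleftrightarrow>
     (\<forall>s t. T0 \<le> s \<longrightarrow> s \<le> t \<longrightarrow> f s \<le> f t) \<or> (\<forall>s t. T0 \<le> s \<longrightarrow> s \<le> t \<longrightarrow> f t \<le> f s)"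

lemma monotone_from_uminus [simp]: "monotone_from T0 (\<lambda>t. - f t) \<longleftrightarrow> monotone_from T0 f"
  unfolding monotone_from_def by auto

lemma monotone_fromI:
  assumes "\<And>t. T0 \<le> t \<Longrightarrow> f t \<le> f (Suc t)"
  shows "monotone_from T0 f"
proof -
  have "f s \<le> f t" if "T0 \<le> s" "s \<le> t" for s t
  proof -
    have "{s..<t} \<subseteq> {T0..}"
      using that by auto
    then show ?thesis
      using lift_Suc_mono_le_ivl[of "{T0..}" f s t] assms that by auto
  qed
  then show ?thesis
    unfolding monotone_from_def by blast
qed

lemma monotone_from_mono: "monotone_from T0 f \<Longrightarrow> T0 \<le> T1 \<Longrightarrow> monotone_from T1 f"
  unfolding monotone_from_def by auto

lemma monotone_from_convergent:
  assumes "monotone_from T0 f" "Bseq f"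
  shows "convergent f"
  using assms Bseq_ignore_initial_segment[of f T0]
    Bseq_monoseq_convergent'_inc[of f T0] Bseq_monoseq_convergent'_dec[of f T0]
  unfolding monotone_from_def by blast

locale cooperative_orbit =
  fixes X Y A :: "nat \<Rightarrow> real" and phi :: real
  assumes X_mono: "X s \<le> X t \<Longrightarrow> Y s \<le> Y t \<Longrightarrow> X (Suc s) \<le> X (Suc t)"
    and Y_Suc: "Y (Suc t) = phi * X (Suc t) + (1 - phi) * A t"
    and A_mono: "Y s \<le> Y t \<Longrightarrow> A s \<le> A t"
    and phi_pos: "0 < phi" and phi_le_1: "phi \<le> 1"
begin

lemma Y_step_diff:
  "Y (Suc (Suc t)) - Y (Suc t) = phi * (X (Suc (Suc t)) - X (Suc t)) + (1 - phi) * (A (Suc t) - A t)"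
  by (simp only: Y_Suc) (simp add: algebra_simps)

lemma rising_step:
  assumes "X t \<le> X (Suc t)" "Y t \<le> Y (Suc t)"
  shows "X (Suc t) \<le> X (Suc (Suc t)) \<and> Y (Suc t) \<le> Y (Suc (Suc t))"
proof -
  have "X (Suc t) \<le> X (Suc (Suc t))" "A t \<le> A (Suc t)"
    using X_mono A_mono assms by blast+
  moreover from this have "0 \<le> phi * (X (Suc (Suc t)) - X (Suc t))" "0 \<le> (1 - phi) * (A (Suc t) - A t)"
    using phi_pos phi_le_1 by simp_all
  ultimately show ?thesis
    using Y_step_diff[of t] by linarith
qed

lemma Y_rises_strictly:
  assumes "Y t \<le> Y (Suc t)" "X (Suc t) < X (Suc (Suc t))"
  shows "Y (Suc t) < Y (Suc (Suc t))"
proof -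
  have "0 < phi * (X (Suc (Suc t)) - X (Suc t))"
    using assms(2) phi_pos by simp
  moreover have "0 \<le> (1 - phi) * (A (Suc t) - A t)"
    using A_mono[OF assms(1)] phi_le_1 by simp
  ultimately show ?thesis
    using Y_step_diff[of t] by linarith
qed

lemma monotone_from_if_rising:
  assumes "X t0 \<le> X (Suc t0)" "Y t0 \<le> Y (Suc t0)"
  shows "monotone_from t0 X \<and> monotone_from t0 Y"
proof -
  have "X t \<le> X (Suc t) \<and> Y t \<le> Y (Suc t)" if "t0 \<le> t" for t
    using that by (induction t rule: dec_induct) (use assms rising_step in auto)
  then show ?thesis
    by (auto intro: monotone_fromI)
qed

lemma alternating_persists:
  assumes alt: "\<And>t. (X (Suc t) < X t \<and> Y t < Y (Suc t)) \<or> (X t < X (Suc t) \<and> Y (Suc t) < Y t)"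
    and start: "X (Suc 0) < X 0"
  shows "X (Suc t) < X t \<and> Y t < Y (Suc t)"
proof (induction t)
  case 0
  then show ?case
    using alt[of 0] start by auto
next
  case (Suc t)
  show ?case
  proof (rule ccontr)
    assume "\<not> ?case"
    then have "X (Suc t) < X (Suc (Suc t))" "Y (Suc (Suc t)) < Y (Suc t)"
      using alt[of "Suc t"] by auto
    with Suc.IH Y_rises_strictly[of t] show False
      by auto
  qed
qed

text \<open>Negation swaps rising and falling steps, so each persistence argument is made only for one
  direction.\<close>

lemma reflected: "cooperative_orbit (\<lambda>t. - X t) (\<lambda>t. - Y t) (\<lambda>t. - A t) phi"
  by unfold_locales (auto intro: X_mono A_mono simp: Y_Suc phi_pos phi_le_1)

lemma eventually_monotone: "\<exists>T0. monotone_from T0 X \<and> monotone_from T0 Y"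
proof -
  consider (rising) t0 where "X t0 \<le> X (Suc t0)" "Y t0 \<le> Y (Suc t0)"
    | (falling) t0 where "X (Suc t0) \<le> X t0" "Y (Suc t0) \<le> Y t0"
    | (alternating) "\<And>t. (X (Suc t) < X t \<and> Y t < Y (Suc t)) \<or> (X t < X (Suc t) \<and> Y (Suc t) < Y t)"
    by (metis not_le less_asym)
  then show ?thesis
  proof cases
    case rising
    then show ?thesis
      using monotone_from_if_rising by blast
  next
    case falling
    then show ?thesis
      using cooperative_orbit.monotone_from_if_rising[OF reflected, of t0] by auto
  next
    case alternating
    then consider "X (Suc 0) < X 0" | "X 0 < X (Suc 0)"
      by (meson less_asym)
    then show ?thesis
    proof cases
      case 1
      then have "X (Suc t) \<le> X t \<and> Y t \<le> Y (Suc t)" for t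
        using alternating_persists[OF alternating] less_imp_le by blast
      then have "monotone_from 0 (\<lambda>t. - X t)" "monotone_from 0 Y"
        by (intro monotone_fromI; simp)+
      then show ?thesis
        by auto
    next
      case 2
      have "X t < X (Suc t) \<and> Y (Suc t) < Y t" for t
        by (rule cooperative_orbit.alternating_persists[OF reflected, simplified])
          (use alternating 2 in auto)
      then have "monotone_from 0 X" "monotone_from 0 (\<lambda>t. - Y t)"
        by (intro monotone_fromI; simp add: less_imp_le)+
      then show ?thesis
        by auto
    qed
  qed
qed

end

section \<open>The reduced planar system\<close>

text \<open>\<open>island_mean (p\<^sub>s / p\<^sub>d) w\<close> is the average of \<open>y\<close> over the neighbours of a node of \<open>V1\<close>
  when \<open>y = w\<close> on \<open>V1\<close> and \<open>y = 1 - w\<close> on \<open>V2\<close>.\<close>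

definition island_mean :: "real \<Rightarrow> real \<Rightarrow> real" where
  "island_mean h w = (h * w + (1 - w)) / (h + 1)"

lemma island_mean_bounds:
  assumes h: "0 < h" and w: "0 \<le> w" "w \<le> 1"
  shows "0 < island_mean h w" "island_mean h w < 1"
proof -
  have "0 < h * w + (1 - w)"
    using h w by (cases "w = 1") (auto intro: add_nonneg_pos)
  moreover have "h * w + (1 - w) < h + 1"
  proof (cases "w = 0")
    case False
    moreover have "h * w \<le> h"
      using h w by (simp add: mult_left_le)
    ultimately show ?thesis
      using w by linarith
  qed (use h in simp)
  ultimately show "0 < island_mean h w" "island_mean h w < 1"
    unfolding island_mean_def using h by simp_all
qed

lemma island_mean_mono:
  assumes "1 \<le> h" "w \<le> w'"
  shows "island_mean h w \<le> island_mean h w'"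
proof -
  have "0 \<le> (h - 1) * (w' - w)"
    using assms by simp
  then have "h * w + (1 - w) \<le> h * w' + (1 - w')"
    by (simp add: algebra_simps)
  then show ?thesis
    unfolding island_mean_def using assms by (simp add: divide_right_mono)
qed

lemma island_mean_complement: "0 < h \<Longrightarrow> island_mean h (1 - w) = 1 - island_mean h w"
  unfolding island_mean_def by (simp add: field_simps)

lemma island_mean_of_counts:
  assumes "0 < N" "0 < pd"
  shows "(N * ps * w + N * pd * (1 - w)) / (N * ps + N * pd) = island_mean (ps / pd) w"
proof -
  have "N * ps + N * pd = N * (ps + pd)" "N * ps * w + N * pd * (1 - w) = N * (ps * w + pd * (1 - w))"
    by (simp_all add: algebra_simps)
  moreover have "ps / pd * w + (1 - w) = (ps * w + pd * (1 - w)) / pd" "ps / pd + 1 = (ps + pd) / pd"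
    using assms by (simp_all add: field_simps)
  ultimately show ?thesis
    unfolding island_mean_def using assms by simp
qed

locale island_orbit =
  fixes X Y :: "nat \<Rightarrow> real" and b h phi :: real
  assumes X_Suc: "X (Suc t) = biased_update b (X t) (island_mean h (Y t))"
    and Y_Suc: "Y (Suc t) = phi * X (Suc t) + (1 - phi) * island_mean h (Y t)"
    and bounds: "0 < X t" "X t < 1" "0 \<le> Y t" "Y t \<le> 1"
    and b_nonneg: "0 \<le> b" and h_ge_1: "1 \<le> h" and phi_pos: "0 < phi" and phi_le_1: "phi \<le> 1"
begin

lemma cooperative: "cooperative_orbit X Y (\<lambda>t. island_mean h (Y t)) phi"
proof
  fix s t
  assume "X s \<le> X t" "Y s \<le> Y t"
  then show "X (Suc s) \<le> X (Suc t)"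
    unfolding X_Suc using island_mean_mono[OF h_ge_1] island_mean_bounds[of h] bounds h_ge_1 b_nonneg
    by (intro biased_update_mono) auto
next
  fix s t
  assume "Y s \<le> Y t"
  then show "island_mean h (Y s) \<le> island_mean h (Y t)"
    using island_mean_mono[OF h_ge_1] by simp
qed (use Y_Suc phi_pos phi_le_1 in auto)

lemma converges:
  obtains T0 L W where "monotone_from T0 X" "monotone_from T0 Y" "X \<longlonglongrightarrow> L" "Y \<longlonglongrightarrow> W"
proof -
  obtain T0 where "monotone_from T0 X" "monotone_from T0 Y"
    using cooperative_orbit.eventually_monotone[OF cooperative] by blast
  moreover have "Bseq X" "Bseq Y"
    using bounds by (auto intro!: BseqI'[of _ 1] simp: less_imp_le)
  ultimately show thesis
    using that monotone_from_convergent unfolding convergent_def by metis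
qed

lemma limit:
  assumes XL: "X \<longlonglongrightarrow> L" and YW: "Y \<longlonglongrightarrow> W" and L: "1/2 < L" "L < 1" and b: "b < 1"
  shows "g_fun L b = phi * (h - 1)"
    and "W = (phi * (h + 1) * L + 1 - phi) / (phi * h + 2 - phi)"
proof -
  have "0 \<le> W" "W \<le> 1"
    using LIMSEQ_le_const[OF YW] LIMSEQ_le_const2[OF YW] bounds by auto
  define M where "M = island_mean h W"
  have M: "0 < M" "M < 1"
    unfolding M_def using island_mean_bounds h_ge_1 \<open>0 \<le> W\<close> \<open>W \<le> 1\<close> by auto
  have mean_lim: "(\<lambda>t. island_mean h (Y t)) \<longlonglongrightarrow> M"
    unfolding M_def island_mean_def using h_ge_1 by (intro tendsto_intros YW) auto
  have "(\<lambda>t. X (Suc t)) \<longlonglongrightarrow> biased_update b L M"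
    unfolding X_Suc using L M by (intro tendsto_biased_update XL mean_lim) auto
  then have fixed: "biased_update b L M = L"
    using LIMSEQ_Suc[OF XL] LIMSEQ_unique by blast
  have "(\<lambda>t. Y (Suc t)) \<longlonglongrightarrow> phi * L + (1 - phi) * M"
    unfolding Y_Suc by (intro tendsto_intros LIMSEQ_Suc[OF XL] mean_lim)
  then have W_eq: "W = phi * L + (1 - phi) * M"
    using LIMSEQ_Suc[OF YW] LIMSEQ_unique by blast
  have M_eq: "(h + 1) * M = (h - 1) * W + 1"
    unfolding M_def island_mean_def using h_ge_1 by (simp add: field_simps)
  have "2 * M - 1 = phi * (h - 1) * (L - M)"
    using M_eq W_eq by algebra
  then show "g_fun L b = phi * (h - 1)"
    using g_fun_of_fixed_point[OF L M b fixed] by blast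
  have "W * (phi * h + 2 - phi) = phi * (h + 1) * L + 1 - phi"
    using M_eq W_eq by algebra
  moreover have "0 < phi * h + 2 - phi"
    using mult_left_mono[OF h_ge_1 less_imp_le[OF phi_pos]] by simp
  ultimately show "W = (phi * (h + 1) * L + 1 - phi) / (phi * h + 2 - phi)"
    by (simp add: eq_divide_eq)
qed

end

section \<open>The symmetric orbit of a two-island network\<close>

lemma nbrs_two_blocks:
  assumes "nbrs E j \<subseteq> V1 \<union> V2"
  shows "nbrs E j = {k\<in>V1. E j k} \<union> {k\<in>V2. E j k}"
  using assms unfolding nbrs_def by auto

lemma deg_two_blocks:
  assumes "finite V1" "finite V2" "V1 \<inter> V2 = {}" "nbrs E j \<subseteq> V1 \<union> V2"
  shows "deg E j = real (card {k\<in>V1. E j k}) + real (card {k\<in>V2. E j k})"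
  unfolding deg_def nbrs_two_blocks[OF assms(4)] using assms(1-3)
  by (subst card_Un_disjoint) auto

lemma sval_two_blocks:
  assumes "finite V1" "finite V2" "V1 \<inter> V2 = {}" "nbrs E j \<subseteq> V1 \<union> V2"
    and "\<forall>k\<in>V1. z k = w1" "\<forall>k\<in>V2. z k = w2"
  shows "sval E z j = real (card {k\<in>V1. E j k}) * w1 + real (card {k\<in>V2. E j k}) * w2"
proof -
  have "sval E z j = (\<Sum>k\<in>{k\<in>V1. E j k}. z k) + (\<Sum>k\<in>{k\<in>V2. E j k}. z k)"
    unfolding sval_def nbrs_two_blocks[OF assms(4)] using assms(1-3) by (subst sum.union_disjoint) auto
  also have "\<dots> = real (card {k\<in>V1. E j k}) * w1 + real (card {k\<in>V2. E j k}) * w2"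
    using assms(5,6) by simp
  finally show ?thesis .
qed

lemma two_island_blocks:
  assumes "two_island E V1 V2 n ps pd"
  shows "finite V1" "finite V2" "V1 \<inter> V2 = {}" "nbrs E j \<subseteq> V1 \<union> V2"
  using assms unfolding two_island_def nbrs_def by auto

lemma two_island_block_degrees:
  assumes "two_island E V1 V2 n ps pd"
  shows "j \<in> V1 \<Longrightarrow> real (card {k\<in>V1. E j k}) = real n * ps \<and> real (card {k\<in>V2. E j k}) = real n * pd"
    and "j \<in> V2 \<Longrightarrow> real (card {k\<in>V1. E j k}) = real n * pd \<and> real (card {k\<in>V2. E j k}) = real n * ps"
  using assms unfolding two_island_def by auto

lemma two_island_deg:
  assumes G: "two_island E V1 V2 n ps pd" and j: "j \<in> V1 \<union> V2"
  shows "deg E j = real n * ps + real n * pd"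
  using deg_two_blocks[OF two_island_blocks[OF G]] two_island_block_degrees[OF G] j by auto

lemma two_island_neighbour_average:
  assumes G: "two_island E V1 V2 n ps pd"
    and z1: "\<forall>k\<in>V1. z k = w" and z2: "\<forall>k\<in>V2. z k = 1 - w"
  shows "j \<in> V1 \<Longrightarrow> sval E z j / deg E j = island_mean (ps / pd) w"
    and "j \<in> V2 \<Longrightarrow> sval E z j / deg E j = island_mean (ps / pd) (1 - w)"
proof -
  have n: "0 < real n" and pd: "0 < pd"
    using G unfolding two_island_def by auto
  note sval = sval_two_blocks[OF two_island_blocks[OF G] z1 z2]
  have deg: "deg E j = real n * ps + real n * pd" if "j \<in> V1 \<union> V2"
    using two_island_deg[OF G that] .
  show "sval E z j / deg E j = island_mean (ps / pd) w" if "j \<in> V1"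
  proof -
    have "sval E z j / deg E j = (real n * ps * w + real n * pd * (1 - w)) / (real n * ps + real n * pd)"
      using sval two_island_block_degrees(1)[OF G that] deg that by simp
    also have "\<dots> = island_mean (ps / pd) w"
      using island_mean_of_counts n pd by blast
    finally show ?thesis .
  qed
  show "sval E z j / deg E j = island_mean (ps / pd) (1 - w)" if "j \<in> V2"
  proof -
    have "sval E z j / deg E j = (real n * ps * (1 - w) + real n * pd * w) / (real n * ps + real n * pd)"
      using sval two_island_block_degrees(2)[OF G that] deg that by simp
    also have "\<dots> = island_mean (ps / pd) (1 - w)"
      using island_mean_of_counts[of "real n" pd ps "1 - w"] n pd by simp
    finally show ?thesis .
  qed
qed

lemma dual_dynamics_biased_update:
  assumes dyn: "dual_dynamics E V phi b x y" and j: "j \<in> V" and deg: "deg E j \<noteq> 0"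
  shows "x (Suc t) j = biased_update b (x t j) (sval E (y t) j / deg E j)"
    and "y (Suc t) j = phi * x (Suc t) j + (1 - phi) * (sval E (y t) j / deg E j)"
proof -
  define p q s d where "p = x t j powr b" and "q = (1 - x t j) powr b"
    and "s = sval E (y t) j" and "d = deg E j"
  have "p * s / (p * s + q * (d - s)) = p * (s / d) / (p * (s / d) + q * (1 - s / d))"
    using deg unfolding d_def by (simp add: field_simps)
  then show "x (Suc t) j = biased_update b (x t j) (sval E (y t) j / deg E j)"
    using dyn j unfolding dual_dynamics_def biased_update_def p_def q_def s_def d_def by auto
  show "y (Suc t) j = phi * x (Suc t) j + (1 - phi) * (sval E (y t) j / deg E j)"
    using dyn j unfolding dual_dynamics_def by auto
qed

lemma two_island_symmetric_step:
  assumes G: "two_island E V1 V2 n ps pd" and dyn: "dual_dynamics E (V1 \<union> V2) phi b x y"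
    and state1: "\<forall>j\<in>V1. x t j = u \<and> y t j = w" and state2: "\<forall>j\<in>V2. x t j = 1 - u \<and> y t j = 1 - w"
    and u: "0 < u" "u < 1" and w: "0 \<le> w" "w \<le> 1"
  shows "\<forall>j\<in>V1. x (Suc t) j = biased_update b u (island_mean (ps / pd) w)
            \<and> y (Suc t) j = phi * x (Suc t) j + (1 - phi) * island_mean (ps / pd) w"
    and "\<forall>j\<in>V2. x (Suc t) j = 1 - biased_update b u (island_mean (ps / pd) w)
            \<and> y (Suc t) j = phi * x (Suc t) j + (1 - phi) * (1 - island_mean (ps / pd) w)"
proof -
  define a where "a = island_mean (ps / pd) w"
  have h: "0 < ps / pd" and n: "0 < real n"
    using G unfolding two_island_def by auto
  then have a: "0 < a" "a < 1"
    unfolding a_def using island_mean_bounds w by auto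
  have deg: "deg E j \<noteq> 0" if "j \<in> V1 \<union> V2" for j
    using two_island_deg[OF G that] G n unfolding two_island_def by auto
  have avg1: "sval E (y t) j / deg E j = a" if "j \<in> V1" for j
    using two_island_neighbour_average(1)[OF G _ _ that] state1 state2 unfolding a_def by auto
  have avg2: "sval E (y t) j / deg E j = 1 - a" if "j \<in> V2" for j
    using two_island_neighbour_average(2)[OF G _ _ that] state1 state2 island_mean_complement[OF h]
    unfolding a_def by auto
  note step = dual_dynamics_biased_update[OF dyn _ deg]
  show "\<forall>j\<in>V1. x (Suc t) j = biased_update b u a \<and> y (Suc t) j = phi * x (Suc t) j + (1 - phi) * a"
  proof
    fix j
    assume j: "j \<in> V1"
    then show "x (Suc t) j = biased_update b u a \<and> y (Suc t) j = phi * x (Suc t) j + (1 - phi) * a"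
      using step[of j t] state1 unfolding avg1[OF j] by simp
  qed
  show "\<forall>j\<in>V2. x (Suc t) j = 1 - biased_update b u a \<and> y (Suc t) j = phi * x (Suc t) j + (1 - phi) * (1 - a)"
  proof
    fix j
    assume j: "j \<in> V2"
    then show "x (Suc t) j = 1 - biased_update b u a \<and> y (Suc t) j = phi * x (Suc t) j + (1 - phi) * (1 - a)"
      using step[of j t] state2 biased_update_complement[OF u a] unfolding avg2[OF j] by simp
  qed
qed

lemma two_island_symmetric_orbit:
  assumes G: "two_island E V1 V2 n ps pd" and dyn: "dual_dynamics E (V1 \<union> V2) phi b x y"
    and phi: "0 \<le> phi" "phi \<le> 1" and u0: "0 < u0" "u0 < 1" and w0: "0 < w0" "w0 < 1"
    and init1: "\<forall>j\<in>V1. x 0 j = u0 \<and> y 0 j = w0" and init2: "\<forall>j\<in>V2. x 0 j = 1 - u0 \<and> y 0 j = 1 - w0"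
    and i: "i \<in> V1"
  shows "0 < x t i" "x t i < 1" "0 < y t i" "y t i < 1"
    and "x (Suc t) i = biased_update b (x t i) (island_mean (ps / pd) (y t i))"
    and "y (Suc t) i = phi * x (Suc t) i + (1 - phi) * island_mean (ps / pd) (y t i)"
proof -
  have h: "0 < ps / pd"
    using G unfolding two_island_def by auto
  note step = two_island_symmetric_step[OF G dyn]
  have inv: "(\<forall>j\<in>V1. x t j = x t i \<and> y t j = y t i) \<and> (\<forall>j\<in>V2. x t j = 1 - x t i \<and> y t j = 1 - y t i)
      \<and> 0 < x t i \<and> x t i < 1 \<and> 0 < y t i \<and> y t i < 1" for t
  proof (induction t)
    case 0
    then show ?case
      using init1 init2 u0 w0 i by auto
  next
    case (Suc t)
    then have st1: "\<forall>j\<in>V1. x t j = x t i \<and> y t j = y t i"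
      and st2: "\<forall>j\<in>V2. x t j = 1 - x t i \<and> y t j = 1 - y t i"
      and x: "0 < x t i" "x t i < 1" and y: "0 < y t i" "y t i < 1"
      by auto
    define a where "a = island_mean (ps / pd) (y t i)"
    define F where "F = biased_update b (x t i) a"
    have a: "0 < a" "a < 1"
      unfolding a_def using island_mean_bounds[OF h] y by auto
    have F: "0 < F" "F < 1"
      unfolding F_def using biased_update_bounds x a by auto
    note S = step[OF st1 st2 x less_imp_le[OF y(1)] less_imp_le[OF y(2)], folded a_def F_def]
    have xi: "x (Suc t) i = F" and yi: "y (Suc t) i = phi * F + (1 - phi) * a"
      using S(1) i by auto
    have "0 < phi * F + (1 - phi) * a" "phi * F + (1 - phi) * a < 1"
      using convex_bound_lt[of "- F" 0 "- a" phi "1 - phi"] convex_bound_lt[of F 1 a phi "1 - phi"] F a phi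
      by simp_all
    moreover have "phi * (1 - F) + (1 - phi) * (1 - a) = 1 - (phi * F + (1 - phi) * a)"
      by algebra
    ultimately show ?case
      using S xi yi F by auto
  qed
  then show x: "0 < x t i" "x t i < 1" and y: "0 < y t i" "y t i < 1"
    by auto
  have "\<forall>j\<in>V1. x t j = x t i \<and> y t j = y t i" "\<forall>j\<in>V2. x t j = 1 - x t i \<and> y t j = 1 - y t i"
    using inv by auto
  note S = step[OF this x less_imp_le[OF y(1)] less_imp_le[OF y(2)]]
  show "x (Suc t) i = biased_update b (x t i) (island_mean (ps / pd) (y t i))"
    and "y (Suc t) i = phi * x (Suc t) i + (1 - phi) * island_mean (ps / pd) (y t i)"
    using S(1) i by auto
qed

theorem lemmaB5:
  fixes E :: "'a \<Rightarrow> 'a \<Rightarrow> bool" and V1 V2 :: "'a set" and n :: nat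
    and ps pd phi b x0 y0 :: real and x y :: "nat \<Rightarrow> 'a \<Rightarrow> real" and i :: 'a and T :: nat
  assumes G: "two_island E V1 V2 n ps pd"
    and phi: "0 < phi" "phi < 1"
    and b: "2 / (phi * (ps / pd - 1) + 2) < b" "b < 1"
    and x0: "1/2 < x0" "x0 < 1"
    and y0: "1/2 \<le> y0" "y0 \<le> x0"
    and init1: "\<forall>j\<in>V1. x 0 j = x0 \<and> y 0 j = y0"
    and init2: "\<forall>j\<in>V2. x 0 j = 1 - x0 \<and> y 0 j = 1 - y0"
    and dyn: "dual_dynamics E (V1 \<union> V2) phi b x y"
    and i: "i \<in> V1"
    and T: "T > 0"
    and hyp: "\<forall>t\<ge>T. x_hat phi (ps / pd) b \<le> x t i \<and> x t i < x_hat 1 (ps / pd) b"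
  shows "\<exists>TT>T.
      ((\<forall>s t. TT \<le> s \<longrightarrow> s \<le> t \<longrightarrow> x s i \<le> x t i) \<or> (\<forall>s t. TT \<le> s \<longrightarrow> s \<le> t \<longrightarrow> x t i \<le> x s i)) \<and>
      ((\<forall>s t. TT \<le> s \<longrightarrow> s \<le> t \<longrightarrow> y s i \<le> y t i) \<or> (\<forall>s t. TT \<le> s \<longrightarrow> s \<le> t \<longrightarrow> y t i \<le> y s i)) \<and>
      (\<lambda>t. x t i) \<longlonglongrightarrow> x_hat phi (ps / pd) b \<and>
      (\<lambda>t. y t i) \<longlonglongrightarrow>
        (phi * (ps / pd + 1) * x_hat phi (ps / pd) b + 1 - phi) / (phi * (ps / pd) + 2 - phi)"
proof -
  define h where "h = ps / pd"
  have h: "1 < h"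
    using G unfolding two_island_def h_def by auto
  have c_phi: "0 < phi * (h - 1)" and c_one: "0 < 1 * (h - 1)"
    using phi h by simp_all
  note bias = bias_above_threshold[OF phi(1) less_imp_le[OF phi(2)] h b(1)[folded h_def]]
  define X Y where "X t = x t i" and "Y t = y t i" for t
  note orbit = two_island_symmetric_orbit[OF G dyn _ _ _ x0(2) _ _ init1 init2 i, folded h_def X_def Y_def]
  interpret island_orbit X Y b h phi
    using orbit phi x0 y0 bias(1) h by unfold_locales (auto intro: less_imp_le)
  obtain T0 L W where mono: "monotone_from T0 X" "monotone_from T0 Y"
    and XL: "X \<longlonglongrightarrow> L" and YW: "Y \<longlonglongrightarrow> W"
    using converges .
  have "x_hat phi h b \<le> X t" "X t \<le> x_hat 1 h b" if "T \<le> t" for t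
    using hyp that unfolding X_def h_def by (auto simp: less_imp_le)
  then have "x_hat phi h b \<le> L" "L \<le> x_hat 1 h b"
    using LIMSEQ_le_const[OF XL] LIMSEQ_le_const2[OF XL] by blast+
  then have L: "1/2 < L" "L < 1"
    using x_hat_root[OF c_phi b(2) bias(2)] x_hat_root[OF c_one b(2) bias(3)] by linarith+
  note lim = limit[OF XL YW L b(2)]
  have "x_hat phi h b = L"
    using x_hat_eqI[OF c_phi b(2) bias(2) L lim(1)] .
  moreover have "(\<lambda>t. x t i) = X" and "(\<lambda>t. y t i) = Y"
    unfolding X_def Y_def by simp_all
  moreover have "monotone_from (max T0 (Suc T)) X" "monotone_from (max T0 (Suc T)) Y"
    using mono monotone_from_mono by simp_all
  ultimately show ?thesis
    unfolding h_def[symmetric] using XL YW lim(2)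
    by (intro exI[of _ "max T0 (Suc T)"]) (auto simp: monotone_from_def)
qed

end
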